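(* Let $n\ge 3$ and let $\mathbf{x}$ be a fractional vertex of $P^n_{\mathrm{SEP}}$. Then $|E_{\mathbf{x}}|\ge n+3$.
   Context: $K_n=(V_n,E_n)$ is the complete undirected graph on $n$ nodes; $\delta(S)$ is the set of edges with exactly one endpoint in $S\subseteq V_n$. $P^n_{\mathrm{SEP}}=\{\mathbf{x}\in\mathbb{R}^{E_n} : \sum_{e\in\delta(v)}x_e=2\ \forall v;\ \sum_{e\in\delta(S)}x_e\ge 2\ \forall S \text{ with } 3\le|S|\le n-3;\ 0\le x_e\le 1\}$. A vertex is an extreme point of $P^n_{\mathrm{SEP}}$; it is fractional if it is not integral. $E_{\mathbf{x}}=\{e\in E_n: x_e>0\}$ is the edge set of the support graph of $\mathbf{x}$. *)

theory Defs
  imports "HOL-Analysis.Analysis"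
begin

text \<open>Nodes of K_n are 0..n-1; an edge is a 2-element subset of the node set.
  Vectors in R^{E_n} are represented as functions on sets of nodes that vanish
  outside E_n.\<close>

definition V_n :: "nat \<Rightarrow> nat set" where
  "V_n n = {..<n}"

definition E_n :: "nat \<Rightarrow> nat set set" where
  "E_n n = {e. e \<subseteq> V_n n \<and> card e = 2}"

definition delta :: "nat \<Rightarrow> nat set \<Rightarrow> nat set set" where
  "delta n S = {e \<in> E_n n. card (e \<inter> S) = 1}"

definition P_SEP :: "nat \<Rightarrow> (nat set \<Rightarrow> real) set" where
  "P_SEP n = {x. (\<forall>e. e \<notin> E_n n \<longrightarrow> x e = 0)
     \<and> (\<forall>v \<in> V_n n. (\<Sum>e\<in>delta n {v}. x e) = 2)
     \<and> (\<forall>S. S \<subseteq> V_n n \<and> 3 \<le> card S \<and> card S \<le> n - 3 \<longrightarrow> (\<Sum>e\<in>delta n S. x e) \<ge> 2)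
     \<and> (\<forall>e \<in> E_n n. 0 \<le> x e \<and> x e \<le> 1)}"

definition is_vertex :: "(nat set \<Rightarrow> real) \<Rightarrow> (nat set \<Rightarrow> real) set \<Rightarrow> bool" where
  "is_vertex x P \<longleftrightarrow> x \<in> P \<and>
     \<not> (\<exists>a\<in>P. \<exists>b\<in>P. \<exists>u::real. a \<noteq> b \<and> 0 < u \<and> u < 1 \<and>
            x = (\<lambda>e. (1 - u) * a e + u * b e))"

definition fractional :: "nat \<Rightarrow> (nat set \<Rightarrow> real) \<Rightarrow> bool" where
  "fractional n x \<longleftrightarrow> (\<exists>e \<in> E_n n. x e \<notin> \<int>)"

definition support_edges :: "nat \<Rightarrow> (nat set \<Rightarrow> real) \<Rightarrow> nat set set" where
  "support_edges n x = {e \<in> E_n n. x e > 0}"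

end

theory Submission
  imports Defs
begin

(* At a vertex x, a node on no fractional edge meets exactly two edges of value 1. A node on a
   fractional edge meets at least two fractional edges, whose values add up to the integer
   2 minus the number of its 1-edges; hence it has support degree at least 3. Handshaking gives
   2 |E_x| >= 2n + |W| for the set W of nodes on fractional edges, so it suffices to show |W| >= 5.
   Every node of W has two fractional neighbours in W, so |W| >= 3. If |W| = 3, every node of W
   has support degree exactly 3, against the parity of the degree sum. If |W| = 4, the fractional
   edges form a graph of minimum degree 2 on four nodes, which has a Hamiltonian 4-cycle. Adding
   +t and -t alternately along it preserves the degree equations and every tight subtour
   constraint, because a tight set S has x(E(S)) = |S| - 1 and therefore cannot contain exactly
   one fractional edge; so x is the midpoint of two points of the polytope. *)

section \<open>Cuts of the complete graph\<close>

lemma finite_V_n: "finite (V_n n)"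
  by (simp add: V_n_def)

lemma card_V_n: "card (V_n n) = n"
  by (simp add: V_n_def)

lemma E_nD:
  assumes "e \<in> E_n n"
  shows "e \<subseteq> V_n n" and "card e = 2" and "finite e"
  using assms by (auto simp: E_n_def intro: card_ge_0_finite)

lemma finite_E_n: "finite (E_n n)"
  by (rule finite_subset[of _ "Pow (V_n n)"]) (auto simp: E_n_def finite_V_n)

lemma finite_delta: "finite (delta n S)"
  by (rule finite_subset[OF _ finite_E_n]) (auto simp: delta_def)

lemma delta_singleton: "delta n {v} = {e \<in> E_n n. v \<in> e}"
  by (auto simp: delta_def Int_insert_right split: if_splits)

lemma doubleton_in_delta_iff:
  "{a,b} \<in> E_n n \<Longrightarrow> {a,b} \<in> delta n S \<longleftrightarrow> (a \<in> S \<longleftrightarrow> b \<notin> S)"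
  by (cases "a = b"; cases "a \<in> S"; cases "b \<in> S")
     (auto simp: delta_def E_n_def Int_insert_left)

lemma P_SEP_degree: "x \<in> P_SEP n \<Longrightarrow> v \<in> V_n n \<Longrightarrow> (\<Sum>e\<in>delta n {v}. x e) = 2"
  by (simp add: P_SEP_def)

lemma P_SEP_bounds: "x \<in> P_SEP n \<Longrightarrow> e \<in> E_n n \<Longrightarrow> 0 \<le> x e \<and> x e \<le> 1"
  by (simp add: P_SEP_def)

lemma sum_delta_singletons:
  fixes y :: "nat set \<Rightarrow> real"
  assumes "S \<subseteq> V_n n"
  shows "(\<Sum>v\<in>S. \<Sum>e\<in>delta n {v}. y e)
       = (\<Sum>e\<in>delta n S. y e) + 2 * (\<Sum>e\<in>{e \<in> E_n n. e \<subseteq> S}. y e)"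
proof -
  have fin_S: "finite S" using assms finite_V_n finite_subset by blast
  have mult: "card (e \<inter> S) = (if card (e \<inter> S) = 1 then 1 else 0) + (if e \<subseteq> S then 2 else 0)"
    if "e \<in> E_n n" for e
  proof -
    have "card (e \<inter> S) \<le> 2" using E_nD[OF that] by (metis card_mono inf_le1)
    moreover have "e \<subseteq> S \<longleftrightarrow> card (e \<inter> S) = 2"
      using E_nD[OF that] by (metis Int_absorb2 card_subset_eq inf_le1 le_iff_inf)
    ultimately show ?thesis by auto
  qed
  have "(\<Sum>v\<in>S. \<Sum>e\<in>delta n {v}. y e) = (\<Sum>v\<in>S. \<Sum>e\<in>E_n n. if v \<in> e then y e else 0)"
    by (simp add: delta_singleton sum.inter_filter[OF finite_E_n])
  also have "\<dots> = (\<Sum>e\<in>E_n n. \<Sum>v\<in>S. if v \<in> e then y e else 0)"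
    by (rule sum.swap)
  also have "\<dots> = (\<Sum>e\<in>E_n n. card (e \<inter> S) * y e)"
    by (simp add: sum.If_cases[OF fin_S] Int_commute)
  also have "\<dots> = (\<Sum>e\<in>E_n n. (if card (e \<inter> S) = 1 then y e else 0) + 2 * (if e \<subseteq> S then y e else 0))"
    by (rule sum.cong[OF refl]) (subst mult, simp_all)
  also have "\<dots> = (\<Sum>e\<in>delta n S. y e) + 2 * (\<Sum>e\<in>{e \<in> E_n n. e \<subseteq> S}. y e)"
    by (simp only: sum.distrib sum_distrib_left[symmetric] delta_def sum.inter_filter[OF finite_E_n])
  finally show ?thesis .
qed

section \<open>Perturbing a point of the subtour polytope\<close>

lemma eventually_le_add_scaled:
  fixes b c k :: real
  assumes "b \<le> c" and "c = b \<Longrightarrow> k = 0"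
  shows "eventually (\<lambda>t. b \<le> c + t * k) (at_right 0)"
proof (cases "c = b")
  case False
  with assms have "b < c" by simp
  have "((\<lambda>t. c + t * k) \<longlongrightarrow> c + 0 * k) (at_right 0)"
    by (intro tendsto_intros)
  then have "((\<lambda>t. c + t * k) \<longlongrightarrow> c) (at_right 0)"
    by simp
  from order_tendstoD(1)[OF this \<open>b < c\<close>] show ?thesis
    by (rule eventually_mono) simp
qed (use assms in simp)

lemma eventually_add_direction_in_P_SEP:
  fixes d :: "nat set \<Rightarrow> real"
  assumes x: "x \<in> P_SEP n"
    and d_outside: "\<forall>e. e \<notin> E_n n \<longrightarrow> d e = 0"
    and d_degree: "\<forall>v\<in>V_n n. (\<Sum>e\<in>delta n {v}. d e) = 0"
    and d_fractional: "\<forall>e\<in>E_n n. d e \<noteq> 0 \<longrightarrow> 0 < x e \<and> x e < 1"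
    and d_tight: "\<forall>S. S \<subseteq> V_n n \<and> 3 \<le> card S \<and> card S \<le> n - 3 \<and> (\<Sum>e\<in>delta n S. x e) = 2
                    \<longrightarrow> (\<Sum>e\<in>delta n S. d e) = 0"
  shows "eventually (\<lambda>t. (\<lambda>e. x e + t * d e) \<in> P_SEP n) (at_right 0)"
proof -
  define A where "A = {S. S \<subseteq> V_n n \<and> 3 \<le> card S \<and> card S \<le> n - 3}"
  have "finite A"
    unfolding A_def by (rule finite_subset[of _ "Pow (V_n n)"]) (auto simp: finite_V_n)
  have x_cut: "\<forall>S\<in>A. 2 \<le> (\<Sum>e\<in>delta n S. x e)"
    using x by (simp add: P_SEP_def A_def)
  have cuts: "eventually (\<lambda>t. \<forall>S\<in>A. 2 \<le> (\<Sum>e\<in>delta n S. x e) + t * (\<Sum>e\<in>delta n S. d e)) (at_right 0)"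
    using \<open>finite A\<close> x_cut d_tight
    by (intro eventually_ball_finite ballI eventually_le_add_scaled) (auto simp: A_def)
  \<comment> \<open>the upper bound \<open>x e + t * d e \<le> 1\<close> is negated so that \<open>eventually_le_add_scaled\<close> applies\<close>
  have bounds: "eventually (\<lambda>t. \<forall>e\<in>E_n n. 0 \<le> x e + t * d e \<and> -1 \<le> - x e + t * (- d e)) (at_right 0)"
  proof (intro eventually_ball_finite[OF finite_E_n] ballI)
    fix e assume e: "e \<in> E_n n"
    show "eventually (\<lambda>t. 0 \<le> x e + t * d e \<and> -1 \<le> - x e + t * (- d e)) (at_right 0)"
    proof (cases "d e = 0")
      case True then show ?thesis using P_SEP_bounds[OF x e] by simp
    next
      case False
      then have "0 < x e" "x e < 1" using d_fractional e by auto
      then show ?thesis by (intro eventually_conj eventually_le_add_scaled) auto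
    qed
  qed
  show ?thesis
    using eventually_conj[OF cuts bounds]
  proof (rule eventually_mono)
    fix t assume "(\<forall>S\<in>A. 2 \<le> (\<Sum>e\<in>delta n S. x e) + t * (\<Sum>e\<in>delta n S. d e)) \<and>
      (\<forall>e\<in>E_n n. 0 \<le> x e + t * d e \<and> -1 \<le> - x e + t * (- d e))"
    then show "(\<lambda>e. x e + t * d e) \<in> P_SEP n"
      using x d_outside d_degree
      by (auto simp: P_SEP_def A_def sum.distrib sum_distrib_left[symmetric])
  qed
qed

lemma not_vertex_by_perturbation:
  fixes d :: "nat set \<Rightarrow> real"
  assumes x: "x \<in> P_SEP n"
    and d_outside: "\<forall>e. e \<notin> E_n n \<longrightarrow> d e = 0"
    and d_degree: "\<forall>v\<in>V_n n. (\<Sum>e\<in>delta n {v}. d e) = 0"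
    and d_fractional: "\<forall>e\<in>E_n n. d e \<noteq> 0 \<longrightarrow> 0 < x e \<and> x e < 1"
    and d_tight: "\<forall>S. S \<subseteq> V_n n \<and> 3 \<le> card S \<and> card S \<le> n - 3 \<and> (\<Sum>e\<in>delta n S. x e) = 2
                    \<longrightarrow> (\<Sum>e\<in>delta n S. d e) = 0"
    and "d f \<noteq> 0"
  shows "\<not> is_vertex x (P_SEP n)"
proof -
  have "eventually (\<lambda>t. (\<lambda>e. x e + t * d e) \<in> P_SEP n) (at_right 0)"
    by (rule eventually_add_direction_in_P_SEP[OF assms(1-5)])
  moreover have "eventually (\<lambda>t. (\<lambda>e. x e + t * - d e) \<in> P_SEP n) (at_right 0)"
    by (rule eventually_add_direction_in_P_SEP[OF x])
       (use d_outside d_degree d_fractional d_tight in \<open>auto simp: sum_negf\<close>)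
  ultimately have "eventually (\<lambda>t. 0 < t \<and> (\<lambda>e. x e + t * d e) \<in> P_SEP n
      \<and> (\<lambda>e. x e + t * - d e) \<in> P_SEP n) (at_right 0)"
    using eventually_at_right_less[of "0::real"] by (intro eventually_conj) assumption+
  then obtain t :: real where "0 < t"
    and plus: "(\<lambda>e. x e + t * d e) \<in> P_SEP n" and minus: "(\<lambda>e. x e + t * - d e) \<in> P_SEP n"
    by (blast dest: eventually_happens'[OF trivial_limit_at_right_real])
  have "(\<lambda>e. x e + t * - d e) \<noteq> (\<lambda>e. x e + t * d e)"
  proof
    assume "(\<lambda>e. x e + t * - d e) = (\<lambda>e. x e + t * d e)"
    then have "x f + t * - d f = x f + t * d f" by meson
    with \<open>0 < t\<close> \<open>d f \<noteq> 0\<close> show False by simp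
  qed
  moreover have "x = (\<lambda>e. (1 - 1/2) * (x e + t * - d e) + 1/2 * (x e + t * d e))"
    by (simp add: algebra_simps)
  ultimately have "\<exists>a\<in>P_SEP n. \<exists>b\<in>P_SEP n. \<exists>u::real. a \<noteq> b \<and> 0 < u \<and> u < 1
      \<and> x = (\<lambda>e. (1 - u) * a e + u * b e)"
    by (intro bexI[OF _ minus] bexI[OF _ plus] exI[of _ "1/2"]) simp
  then show ?thesis
    unfolding is_vertex_def by blast
qed

definition fractional_edges :: "nat \<Rightarrow> (nat set \<Rightarrow> real) \<Rightarrow> nat set set" where
  "fractional_edges n x = {e \<in> E_n n. 0 < x e \<and> x e < 1}"

lemma tight_set_not_one_fractional_edge:
  assumes x: "x \<in> P_SEP n" and S: "S \<subseteq> V_n n" and tight: "(\<Sum>e\<in>delta n S. x e) = 2"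
  shows "{e \<in> fractional_edges n x. e \<subseteq> S} \<noteq> {f}"
proof
  assume only_f: "{e \<in> fractional_edges n x. e \<subseteq> S} = {f}"
  define inner where "inner = {e \<in> E_n n. e \<subseteq> S}"
  have "finite inner" using finite_E_n by (simp add: inner_def)
  have f: "f \<in> inner" "0 < x f" "x f < 1"
    using only_f by (auto simp: fractional_edges_def inner_def)
  have "(\<Sum>v\<in>S. \<Sum>e\<in>delta n {v}. x e) = (\<Sum>v\<in>S. 2)"
    using S P_SEP_degree[OF x] by (intro sum.cong) auto
  then have "(\<Sum>e\<in>inner. x e) = real (card S) - 1"
    using sum_delta_singletons[OF S, of x] tight by (simp add: inner_def)
  moreover have "(\<Sum>e\<in>inner. x e) = x f + (\<Sum>e\<in>inner - {f}. x e)"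
    using sum.remove[OF \<open>finite inner\<close> \<open>f \<in> inner\<close>] by simp
  moreover have "(\<Sum>e\<in>inner - {f}. x e) \<in> \<int>"
  proof (rule Ints_sum)
    fix e assume "e \<in> inner - {f}"
    then have "e \<in> E_n n" and "\<not> (0 < x e \<and> x e < 1)"
      using only_f by (auto simp: inner_def fractional_edges_def)
    with P_SEP_bounds[OF x] have "x e = 0 \<or> x e = 1" by force
    then show "x e \<in> \<int>" by auto
  qed
  ultimately have "x f \<in> \<int>"
    by (metis Ints_diff Ints_of_nat Ints_1 add_diff_cancel_right')
  with f show False by (auto elim!: Ints_cases)
qed

section \<open>The fractional support graph\<close>

definition fractional_nodes :: "nat \<Rightarrow> (nat set \<Rightarrow> real) \<Rightarrow> nat set" where
  "fractional_nodes n x = \<Union> (fractional_edges n x)"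

definition fractional_neighbours :: "nat \<Rightarrow> (nat set \<Rightarrow> real) \<Rightarrow> nat \<Rightarrow> nat set" where
  "fractional_neighbours n x v = {u. {v,u} \<in> fractional_edges n x}"

definition support_degree :: "nat \<Rightarrow> (nat set \<Rightarrow> real) \<Rightarrow> nat \<Rightarrow> nat" where
  "support_degree n x v = card {e \<in> delta n {v}. 0 < x e}"

lemma fractional_nodes_subset: "fractional_nodes n x \<subseteq> V_n n"
  by (auto simp: fractional_nodes_def fractional_edges_def dest: E_nD(1))

lemma finite_fractional_nodes: "finite (fractional_nodes n x)"
  using fractional_nodes_subset finite_V_n by (rule finite_subset)

lemma fractional_neighbours_subset: "fractional_neighbours n x v \<subseteq> fractional_nodes n x - {v}"
proof
  fix u assume "u \<in> fractional_neighbours n x v"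
  then have "{v,u} \<in> fractional_edges n x" by (simp add: fractional_neighbours_def)
  moreover from this have "u \<noteq> v"
    using E_nD(2) by (fastforce simp: fractional_edges_def)
  ultimately show "u \<in> fractional_nodes n x - {v}"
    by (auto simp: fractional_nodes_def)
qed

lemma card_fractional_neighbours:
  "card (fractional_neighbours n x v) = card {e \<in> delta n {v}. 0 < x e \<and> x e < 1}"
proof -
  have "{e \<in> delta n {v}. 0 < x e \<and> x e < 1} = (\<lambda>u. {v,u}) ` fractional_neighbours n x v"
  proof (intro equalityI subsetI)
    fix e assume e: "e \<in> {e \<in> delta n {v}. 0 < x e \<and> x e < 1}"
    then have "e \<in> E_n n" "v \<in> e" by (auto simp: delta_singleton)
    then obtain u where "e = {v,u}" using E_nD(2) by (metis card_2_iff insert_commute insertE singletonD)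
    with e show "e \<in> (\<lambda>u. {v,u}) ` fractional_neighbours n x v"
      by (auto simp: fractional_neighbours_def fractional_edges_def delta_singleton)
  qed (auto simp: fractional_neighbours_def fractional_edges_def delta_singleton)
  moreover have "inj_on (\<lambda>u. {v,u}) (fractional_neighbours n x v)"
    by (auto intro!: inj_onI simp: doubleton_eq_iff)
  ultimately show ?thesis by (simp add: card_image)
qed

lemma support_degree_split:
  assumes x: "x \<in> P_SEP n" and v: "v \<in> V_n n"
  shows "support_degree n x v = card (fractional_neighbours n x v) + card {e \<in> delta n {v}. x e = 1}"
    and "(\<Sum>e\<in>{e \<in> delta n {v}. 0 < x e \<and> x e < 1}. x e) + card {e \<in> delta n {v}. x e = 1} = 2"
proof -
  define frac where "frac = {e \<in> delta n {v}. 0 < x e \<and> x e < 1}"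
  define one where "one = {e \<in> delta n {v}. x e = 1}"
  have bounds: "0 \<le> x e \<and> x e \<le> 1" if "e \<in> delta n {v}" for e
    using that P_SEP_bounds[OF x] by (auto simp: delta_def)
  have split: "{e \<in> delta n {v}. 0 < x e} = frac \<union> one" and "frac \<inter> one = {}"
    using bounds by (force simp: frac_def one_def)+
  have fin: "finite frac" "finite one"
    by (simp_all add: frac_def one_def finite_delta)
  show "support_degree n x v = card (fractional_neighbours n x v) + card one"
    using fin \<open>frac \<inter> one = {}\<close>
    by (simp add: support_degree_def split card_Un_disjoint card_fractional_neighbours frac_def)
  have "2 = (\<Sum>e\<in>delta n {v}. x e)"
    using P_SEP_degree[OF x v] by simp
  also have "\<dots> = (\<Sum>e\<in>{e \<in> delta n {v}. 0 < x e}. x e)"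
    using bounds by (intro sum.mono_neutral_right finite_delta) force+
  also have "\<dots> = (\<Sum>e\<in>frac. x e) + card one"
    using fin \<open>frac \<inter> one = {}\<close> by (simp add: split sum.union_disjoint one_def)
  finally show "(\<Sum>e\<in>frac. x e) + card one = 2" by simp
qed

lemma fractional_node_degrees:
  assumes x: "x \<in> P_SEP n" and v: "v \<in> fractional_nodes n x"
  shows "2 \<le> card (fractional_neighbours n x v)"
    and "3 \<le> support_degree n x v"
    and "support_degree n x v \<le> card (fractional_neighbours n x v) + 1"
proof -
  define frac where "frac = {e \<in> delta n {v}. 0 < x e \<and> x e < 1}"
  define one where "one = {e \<in> delta n {v}. x e = 1}"
  have "v \<in> V_n n" using v fractional_nodes_subset by blast
  note split = support_degree_split[OF x this, folded frac_def one_def]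
  have "finite frac" by (simp add: frac_def finite_delta)
  have "frac \<noteq> {}"
    using v by (auto simp: frac_def fractional_nodes_def fractional_edges_def delta_singleton)
  have "0 < (\<Sum>e\<in>frac. x e)"
    using \<open>finite frac\<close> \<open>frac \<noteq> {}\<close> by (intro sum_pos) (auto simp: frac_def)
  moreover have "(\<Sum>e\<in>frac. x e) < card frac"
    using sum_strict_mono[OF \<open>finite frac\<close> \<open>frac \<noteq> {}\<close>, of x "\<lambda>_. 1"] by (simp add: frac_def)
  ultimately have "card one \<le> 1" and "2 < card frac + card one"
    using split(2) by linarith+
  then show "2 \<le> card (fractional_neighbours n x v)"
    and "3 \<le> support_degree n x v"
    and "support_degree n x v \<le> card (fractional_neighbours n x v) + 1"
    using split(1) card_fractional_neighbours[of n x v] \<open>0 < (\<Sum>e\<in>frac. x e)\<close> split(2)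
    by (simp_all add: frac_def)
qed

lemma support_degree_integral_node:
  assumes x: "x \<in> P_SEP n" and v: "v \<in> V_n n - fractional_nodes n x"
  shows "support_degree n x v = 2"
proof -
  have no_frac: "{e \<in> delta n {v}. 0 < x e \<and> x e < 1} = {}"
    using v by (auto simp: fractional_nodes_def fractional_edges_def delta_singleton)
  have "v \<in> V_n n" using v by simp
  then have "(\<Sum>e\<in>{e \<in> delta n {v}. 0 < x e \<and> x e < 1}. x e) + card {e \<in> delta n {v}. x e = 1} = 2"
    by (rule support_degree_split(2)[OF x])
  then have "real (card {e \<in> delta n {v}. x e = 1}) = 2"
    unfolding no_frac by simp
  then show ?thesis
    using support_degree_split(1)[OF x \<open>v \<in> V_n n\<close>] card_fractional_neighbours[of n x v]
    unfolding no_frac by simp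
qed

lemma sum_support_degree: "(\<Sum>v\<in>V_n n. support_degree n x v) = 2 * card (support_edges n x)"
proof -
  define y :: "nat set \<Rightarrow> real" where "y e = (if 0 < x e then 1 else 0)" for e
  have "card (e \<inter> V_n n) = 2" if "e \<in> E_n n" for e
    using E_nD[OF that] by (simp add: Int_absorb2)
  then have "delta n (V_n n) = {}"
    by (auto simp: delta_def)
  moreover have "{e \<in> E_n n. e \<subseteq> V_n n} = E_n n"
    by (auto dest: E_nD(1))
  ultimately have "(\<Sum>v\<in>V_n n. \<Sum>e\<in>delta n {v}. y e) = 2 * (\<Sum>e\<in>E_n n. y e)"
    using sum_delta_singletons[of "V_n n" n y] by simp
  moreover have "(\<Sum>e\<in>delta n {v}. y e) = support_degree n x v" for v
    using sum.inter_filter[OF finite_delta, where g="\<lambda>_. 1::real" and P="\<lambda>e. 0 < x e"]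
    by (simp add: y_def support_degree_def)
  moreover have "(\<Sum>e\<in>E_n n. y e) = card (support_edges n x)"
    using sum.inter_filter[OF finite_E_n, where g="\<lambda>_. 1::real" and P="\<lambda>e. 0 < x e"]
    by (simp add: y_def support_edges_def)
  ultimately have "real (\<Sum>v\<in>V_n n. support_degree n x v) = real (2 * card (support_edges n x))"
    by simp
  then show ?thesis by (simp only: of_nat_eq_iff)
qed

lemma sum_support_degree_fractional_nodes:
  assumes x: "x \<in> P_SEP n"
  shows "(\<Sum>v\<in>fractional_nodes n x. support_degree n x v) + 2 * (n - card (fractional_nodes n x))
       = 2 * card (support_edges n x)"
proof -
  have "(\<Sum>v\<in>V_n n - fractional_nodes n x. support_degree n x v) = 2 * (n - card (fractional_nodes n x))"
    using support_degree_integral_node[OF x] fractional_nodes_subset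
    by (simp add: card_Diff_subset finite_fractional_nodes card_V_n)
  then show ?thesis
    using sum.subset_diff[OF fractional_nodes_subset[of n x] finite_V_n, of "support_degree n x"]
      sum_support_degree[of n x]
    by linarith
qed

section \<open>Vertices with few fractional nodes\<close>

lemma card_fractional_neighbours_le:
  assumes "v \<in> fractional_nodes n x"
  shows "card (fractional_neighbours n x v) \<le> card (fractional_nodes n x) - 1"
proof -
  have "card (fractional_neighbours n x v) \<le> card (fractional_nodes n x - {v})"
    by (intro card_mono fractional_neighbours_subset) (simp add: finite_fractional_nodes)
  with assms show ?thesis by (simp add: finite_fractional_nodes)
qed

lemma card_fractional_nodes_ge_3:
  assumes "x \<in> P_SEP n" and "v \<in> fractional_nodes n x"
  shows "3 \<le> card (fractional_nodes n x)"
  using fractional_node_degrees(1)[OF assms] card_fractional_neighbours_le[OF assms(2)] by linarith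

lemma card_fractional_nodes_ne_3:
  assumes x: "x \<in> P_SEP n"
  shows "card (fractional_nodes n x) \<noteq> 3"
proof
  assume three: "card (fractional_nodes n x) = 3"
  have "support_degree n x v = 3" if "v \<in> fractional_nodes n x" for v
    using fractional_node_degrees(2,3)[OF x that] card_fractional_neighbours_le[OF that] three
    by linarith
  then have "(\<Sum>v\<in>fractional_nodes n x. support_degree n x v) = 9"
    using three by simp
  with sum_support_degree_fractional_nodes[OF x] three
  have "2 * card (support_edges n x) = 9 + 2 * (n - 3)"
    by simp
  then have "even (9 + 2 * (n - 3))"
    by (metis dvd_triv_left)
  then show False
    by simp
qed

lemma four_cycle_if_adjacent_to_one_of_two:
  fixes F :: "'a set set"
  assumes W: "card W = 4"
    and adj: "\<And>v u w. {v,u,w} \<subseteq> W \<Longrightarrow> distinct [v,u,w] \<Longrightarrow> {v,u} \<in> F \<or> {v,w} \<in> F"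
  shows "\<exists>a b c d. W = {a,b,c,d} \<and> distinct [a,b,c,d]
           \<and> {a,b} \<in> F \<and> {b,c} \<in> F \<and> {c,d} \<in> F \<and> {d,a} \<in> F"
proof -
  obtain a b c d where W_eq: "W = {a,b,c,d}" and dist: "distinct [a,b,c,d]"
    using W by (auto simp: card_Suc_eq numeral_eq_Suc)
  have cycle: "?thesis"
    if "W = {p,q,r,s}" "distinct [p,q,r,s]" "{p,q} \<in> F" "{q,r} \<in> F" "{r,s} \<in> F" "{s,p} \<in> F"
    for p q r s
    using that by blast
  have "{a,b} \<in> F \<or> {a,c} \<in> F" "{a,b} \<in> F \<or> {a,d} \<in> F" "{a,c} \<in> F \<or> {a,d} \<in> F"
       "{a,b} \<in> F \<or> {b,c} \<in> F" "{a,b} \<in> F \<or> {b,d} \<in> F" "{b,c} \<in> F \<or> {b,d} \<in> F"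
       "{a,c} \<in> F \<or> {b,c} \<in> F" "{a,c} \<in> F \<or> {c,d} \<in> F" "{b,c} \<in> F \<or> {c,d} \<in> F"
       "{a,d} \<in> F \<or> {b,d} \<in> F" "{a,d} \<in> F \<or> {c,d} \<in> F" "{b,d} \<in> F \<or> {c,d} \<in> F"
    using adj[of a b c] adj[of a b d] adj[of a c d] adj[of b a c] adj[of b a d] adj[of b c d]
      adj[of c a b] adj[of c a d] adj[of c b d] adj[of d a b] adj[of d a c] adj[of d b c] dist
    by (auto simp: W_eq insert_commute)
  then consider "{a,b} \<in> F" "{b,c} \<in> F" "{c,d} \<in> F" "{a,d} \<in> F"
    | "{a,b} \<in> F" "{b,d} \<in> F" "{c,d} \<in> F" "{a,c} \<in> F"
    | "{a,c} \<in> F" "{b,c} \<in> F" "{b,d} \<in> F" "{a,d} \<in> F"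
    by blast
  then show ?thesis
  proof cases
    case 1 show ?thesis by (rule cycle[of a b c d]) (use 1 W_eq dist in \<open>auto simp: insert_commute\<close>)
  next
    case 2 show ?thesis by (rule cycle[of a b d c]) (use 2 W_eq dist in \<open>auto simp: insert_commute\<close>)
  next
    case 3 show ?thesis by (rule cycle[of a c b d]) (use 3 W_eq dist in \<open>auto simp: insert_commute\<close>)
  qed
qed

lemma fractional_four_cycle_not_vertex:
  assumes x: "x \<in> P_SEP n"
    and dist: "distinct [a,b,c,d]"
    and cycle: "{a,b} \<in> fractional_edges n x" "{b,c} \<in> fractional_edges n x"
      "{c,d} \<in> fractional_edges n x" "{d,a} \<in> fractional_edges n x"
    and nodes: "fractional_nodes n x \<subseteq> {a,b,c,d}"
  shows "\<not> is_vertex x (P_SEP n)"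
proof -
  define g :: "nat set \<Rightarrow> real" where
    "g e = (if e = {a,b} then 1 else 0) - (if e = {b,c} then 1 else 0)
         + (if e = {c,d} then 1 else 0) - (if e = {d,a} then 1 else 0)" for e
  have E: "{a,b} \<in> E_n n" "{b,c} \<in> E_n n" "{c,d} \<in> E_n n" "{d,a} \<in> E_n n"
    using cycle by (simp_all add: fractional_edges_def)
  have g_cut: "(\<Sum>e\<in>delta n S. g e) =
      (if a \<in> S \<longleftrightarrow> b \<notin> S then 1 else 0) - (if b \<in> S \<longleftrightarrow> c \<notin> S then 1 else 0)
    + (if c \<in> S \<longleftrightarrow> d \<notin> S then 1 else 0) - (if d \<in> S \<longleftrightarrow> a \<notin> S then 1 else 0)" for S
    unfolding g_def using doubleton_in_delta_iff[OF E(1)] doubleton_in_delta_iff[OF E(2)]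
      doubleton_in_delta_iff[OF E(3)] doubleton_in_delta_iff[OF E(4)]
    by (simp add: sum.distrib sum_subtractf finite_delta)
  have g_nonzero_cut: "S \<inter> {a,b,c,d} \<in> {{a,b},{b,c},{c,d},{d,a}}"
    if "(\<Sum>e\<in>delta n S. g e) \<noteq> 0" for S
    using that dist unfolding g_cut
    by (cases "a \<in> S"; cases "b \<in> S"; cases "c \<in> S"; cases "d \<in> S") auto
  have g_tight: "(\<Sum>e\<in>delta n S. g e) = 0"
    if S: "S \<subseteq> V_n n" and tight: "(\<Sum>e\<in>delta n S. x e) = 2" for S
  proof (rule ccontr)
    assume "(\<Sum>e\<in>delta n S. g e) \<noteq> 0"
    then have "S \<inter> {a,b,c,d} \<in> {{a,b},{b,c},{c,d},{d,a}}"
      by (rule g_nonzero_cut)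
    then have p: "S \<inter> {a,b,c,d} \<in> fractional_edges n x"
      using cycle by auto
    have "{e \<in> fractional_edges n x. e \<subseteq> S} = {S \<inter> {a,b,c,d}}"
    proof (intro equalityI subsetI)
      fix e assume e: "e \<in> {e \<in> fractional_edges n x. e \<subseteq> S}"
      then have "e \<subseteq> S \<inter> {a,b,c,d}"
        using nodes by (auto simp: fractional_nodes_def)
      moreover have "e \<in> E_n n" "S \<inter> {a,b,c,d} \<in> E_n n"
        using e p by (simp_all add: fractional_edges_def)
      then have "card e = card (S \<inter> {a,b,c,d})"
        by (simp add: E_nD(2))
      ultimately show "e \<in> {S \<inter> {a,b,c,d}}"
        by (simp add: card_subset_eq)
    qed (use p in auto)
    with tight_set_not_one_fractional_edge[OF x S tight] show False by blast
  qed
  show ?thesis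
  proof (rule not_vertex_by_perturbation[OF x, of g "{a,b}"])
    show "\<forall>e. e \<notin> E_n n \<longrightarrow> g e = 0" using E by (auto simp: g_def)
    show "\<forall>v\<in>V_n n. (\<Sum>e\<in>delta n {v}. g e) = 0" using dist by (auto simp: g_cut)
    show "\<forall>e\<in>E_n n. g e \<noteq> 0 \<longrightarrow> 0 < x e \<and> x e < 1"
      using cycle by (auto simp: g_def fractional_edges_def)
    show "\<forall>S. S \<subseteq> V_n n \<and> 3 \<le> card S \<and> card S \<le> n - 3 \<and> (\<Sum>e\<in>delta n S. x e) = 2
            \<longrightarrow> (\<Sum>e\<in>delta n S. g e) = 0"
      using g_tight by simp
    show "g {a,b} \<noteq> 0" using dist by (auto simp: g_def doubleton_eq_iff)
  qed
qed

lemma card_fractional_nodes_ne_4: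
  assumes vertex: "is_vertex x (P_SEP n)"
  shows "card (fractional_nodes n x) \<noteq> 4"
proof
  assume four: "card (fractional_nodes n x) = 4"
  have x: "x \<in> P_SEP n" using vertex by (simp add: is_vertex_def)
  have "{v,u} \<in> fractional_edges n x \<or> {v,w} \<in> fractional_edges n x"
    if "{v,u,w} \<subseteq> fractional_nodes n x" "distinct [v,u,w]" for v u w
  proof (rule ccontr)
    assume "\<not> ?thesis"
    then have "fractional_neighbours n x v \<subseteq> fractional_nodes n x - {v,u,w}"
      using fractional_neighbours_subset[of n x v] by (auto simp: fractional_neighbours_def)
    then have "card (fractional_neighbours n x v) \<le> card (fractional_nodes n x - {v,u,w})"
      by (intro card_mono) (simp add: finite_fractional_nodes)
    also have "\<dots> = 1"
      using that four by (simp add: card_Diff_subset finite_fractional_nodes)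
    finally show False
      using fractional_node_degrees(1)[OF x, of v] that by simp
  qed
  then obtain a b c d where nodes: "fractional_nodes n x = {a,b,c,d}" and "distinct [a,b,c,d]"
    and "{a,b} \<in> fractional_edges n x" "{b,c} \<in> fractional_edges n x"
      "{c,d} \<in> fractional_edges n x" "{d,a} \<in> fractional_edges n x"
    using four_cycle_if_adjacent_to_one_of_two[OF four] by metis
  then have "\<not> is_vertex x (P_SEP n)"
    by (intro fractional_four_cycle_not_vertex[OF x]) (auto simp: nodes)
  with vertex show False by contradiction
qed

lemma fractional_nodes_nonempty:
  assumes "x \<in> P_SEP n" and "fractional n x"
  shows "fractional_nodes n x \<noteq> {}"
proof -
  obtain e where e: "e \<in> E_n n" "x e \<notin> \<int>"
    using assms(2) by (auto simp: fractional_def)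
  then have "x e \<noteq> 0" "x e \<noteq> 1" by auto
  with P_SEP_bounds[OF assms(1) e(1)] have "e \<in> fractional_edges n x"
    using e(1) by (simp add: fractional_edges_def)
  moreover have "e \<noteq> {}" using E_nD(2)[OF e(1)] by auto
  ultimately show ?thesis by (auto simp: fractional_nodes_def)
qed

lemma card_support_edges_ge:
  assumes x: "x \<in> P_SEP n"
  shows "2 * n + card (fractional_nodes n x) \<le> 2 * card (support_edges n x)"
proof -
  have "3 * card (fractional_nodes n x) \<le> (\<Sum>v\<in>fractional_nodes n x. support_degree n x v)"
    using sum_mono[of "fractional_nodes n x" "\<lambda>_. 3" "support_degree n x"]
      fractional_node_degrees(2)[OF x] by simp
  moreover have "card (fractional_nodes n x) \<le> n"
    using card_mono[OF finite_V_n fractional_nodes_subset] by (simp add: card_V_n)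
  ultimately show ?thesis
    using sum_support_degree_fractional_nodes[OF x] by linarith
qed

theorem mainTheorem2:
  fixes n :: nat and x :: "nat set \<Rightarrow> real"
  assumes "n \<ge> 3"
    and "is_vertex x (P_SEP n)"
    and "fractional n x"
  shows "card (support_edges n x) \<ge> n + 3"
proof -
  have x: "x \<in> P_SEP n" using assms(2) by (simp add: is_vertex_def)
  then obtain v where "v \<in> fractional_nodes n x"
    using fractional_nodes_nonempty assms(3) by blast
  then have "3 \<le> card (fractional_nodes n x)"
    by (rule card_fractional_nodes_ge_3[OF x])
  with card_fractional_nodes_ne_3[OF x] card_fractional_nodes_ne_4[OF assms(2)]
  have "5 \<le> card (fractional_nodes n x)" by linarith
  with card_support_edges_ge[OF x] show ?thesis by linarith
qed

end
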